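(* (i) Let $E$ be a finite set and $\xi\mapsto A(\xi)$, $\xi\in\mathbb R$, a $C^1$ family of complex square matrices indexed by $E\times E$. Assume there is an invertible matrix $U$ such that $\widetilde A(\xi):=A(\xi)U$ is self-adjoint for all $\xi$ and $\partial_\xi\widetilde A(\xi)\geq\beta I$ for some $\beta>0$. Then for every $\alpha>0$, $$\big|\{\xi\in\mathbb R:\|A^{-1}(\xi)\|_0\geq\alpha^{-1}\}\big|\leq2|E|\alpha\beta^{-1}\|U\|_0.$$ (ii) In particular, if $A(\xi)=Z+\xi W$ with $Z,W$ self-adjoint, $W$ invertible and $\beta_1I\leq Z\leq\beta_2I$ with $\beta_1>0$, then for every $\alpha>0$ $$\big|\{\xi\in\mathbb R:\|A^{-1}(\xi)\|_0\geq\alpha^{-1}\}\big|\leq2|E|\alpha\beta_2\beta_1^{-1}\|W^{-1}\|_0.$$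
   Context: $\|\cdot\|_0$ is the operator norm on $\mathbb C^E$ with its Euclidean norm; $\|A^{-1}(\xi)\|_0:=+\infty$ if $A(\xi)$ is not invertible; $|E|$ is the cardinality of $E$; $|\cdot|$ of a subset of $\mathbb R$ is its Lebesgue measure. *)

theory Defs
  imports "HOL-Analysis.Analysis"
begin

text \<open>Matrices indexed by E x E are modelled as complex^'n^'n with 'n a finite type
  (so |E| = CARD('n)); vectors in C^E are complex^'n, whose norm is the Euclidean norm.\<close>

definition cadj :: "complex^'n^'m \<Rightarrow> complex^'m^'n" where
  "cadj A = (\<chi> i j. cnj (A $ j $ i))"

definition self_adjoint :: "complex^'n^'n \<Rightarrow> bool" where
  "self_adjoint A \<longleftrightarrow> cadj A = A"

definition herm_form :: "complex^'n^'n \<Rightarrow> complex^'n \<Rightarrow> complex" where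
  "herm_form M x = (\<Sum>i\<in>UNIV. cnj (x $ i) * (M *v x) $ i)"

definition loewner_le :: "complex^'n^'n \<Rightarrow> complex^'n^'n \<Rightarrow> bool" where
  "loewner_le A B \<longleftrightarrow> (\<forall>x. Im (herm_form (B - A) x) = 0 \<and> 0 \<le> Re (herm_form (B - A) x))"

definition opnorm :: "complex^'n^'n \<Rightarrow> real" where
  "opnorm A = onorm (\<lambda>x. A *v x)"

definition inv_opnorm :: "complex^'n^'n \<Rightarrow> ereal" where
  "inv_opnorm A = (if invertible A then ereal (opnorm (matrix_inv A)) else \<infinity>)"

end

theory Submission
  imports Defs
begin

text \<open>Put \<open>B \<xi> = A \<xi> ** U\<close>. If \<open>\<parallel>A \<xi>\<inverse>\<parallel> \<ge> 1/\<alpha>\<close>, some unit vector is moved by at most \<open>\<alpha>\<close> by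
  \<open>A \<xi>\<close>, so the self-adjoint matrix \<open>B \<xi>\<close> moves some nonzero vector by at most \<open>c = \<alpha>\<parallel>U\<parallel>\<close> times
  its length; hence \<open>B \<xi>\<close> has an eigenvalue in \<open>[-c, c]\<close>, and it has strictly more eigenvalues
  \<open>\<le> c\<close> than eigenvalues \<open>< -c\<close>. Since \<open>B' \<ge> \<beta>\<close>, we have \<open>B \<eta> \<ge> B \<xi> + \<beta>(\<eta> - \<xi>)\<close>, so if
  \<open>\<eta> - \<xi> > 2c/\<beta>\<close> the eigenvalues \<open>\<le> c\<close> of \<open>B \<eta>\<close> are at most as many as the eigenvalues \<open>< -c\<close> of
  \<open>B \<xi>\<close> (min-max). The number of eigenvalues \<open>\<le> c\<close> therefore strictly decreases along any
  \<open>2c/\<beta>\<close>-separated chain of bad points, so such chains have at most \<open>|E|\<close> elements, and a set of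
  reals without longer chains has measure at most \<open>|E| \<cdot> 2c/\<beta>\<close>. Part (ii) is part (i) for
  \<open>U = W\<inverse> Z\<close>.\<close>

section \<open>Complex inner product and Hermitian forms\<close>

definition cinner :: "complex^'n \<Rightarrow> complex^'n \<Rightarrow> complex" where
  "cinner x y = (\<Sum>i\<in>UNIV. cnj (x $ i) * y $ i)"

lemma cinner_add_left: "cinner (x + y) z = cinner x z + cinner y z"
  by (simp add: cinner_def distrib_right sum.distrib)

lemma cinner_add_right: "cinner x (y + z) = cinner x y + cinner x z"
  by (simp add: cinner_def distrib_left sum.distrib)

lemma cinner_diff_right: "cinner x (y - z) = cinner x y - cinner x z"
  by (simp add: cinner_def right_diff_distrib sum_subtractf)

lemma cinner_smult_left: "cinner (a *s x) y = cnj a * cinner x y"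
  by (simp add: cinner_def sum_distrib_left algebra_simps)

lemma cinner_smult_right: "cinner x (a *s y) = a * cinner x y"
  by (simp add: cinner_def sum_distrib_left algebra_simps)

lemma cinner_zero_left [simp]: "cinner 0 x = 0"
  and cinner_zero_right [simp]: "cinner x 0 = 0"
  by (simp_all add: cinner_def)

lemma cinner_sum_left: "cinner (\<Sum>b\<in>B. f b) x = (\<Sum>b\<in>B. cinner (f b) x)"
  by (induct B rule: infinite_finite_induct) (simp_all add: cinner_add_left)

lemma cinner_sum_right: "cinner x (\<Sum>b\<in>B. f b) = (\<Sum>b\<in>B. cinner x (f b))"
  by (induct B rule: infinite_finite_induct) (simp_all add: cinner_add_right)

lemma cnj_cinner: "cnj (cinner x y) = cinner y x"
  by (simp add: cinner_def mult.commute)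

lemma cinner_self: "cinner x x = of_real ((norm x)\<^sup>2)"
proof -
  have "(norm x)\<^sup>2 = (\<Sum>i\<in>UNIV. (cmod (x $ i))\<^sup>2)"
    by (simp add: norm_vec_def L2_set_def sum_nonneg)
  then show ?thesis
    by (simp add: cinner_def of_real_sum complex_norm_square mult.commute del: of_real_power)
qed

lemma Re_cinner_self: "Re (cinner x x) = (norm x)\<^sup>2"
  by (simp add: cinner_self del: of_real_power)

lemma cinner_self_eq_zero [simp]: "cinner x x = 0 \<longleftrightarrow> x = 0"
  by (simp add: cinner_self)

lemma cinner_adjoint: "cinner x (M *v y) = cinner (cadj M *v x) y"
proof -
  have "cinner x (M *v y) = (\<Sum>i\<in>UNIV. \<Sum>j\<in>UNIV. cnj (x $ i) * (M $ i $ j * y $ j))"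
    by (simp add: cinner_def matrix_vector_mult_def sum_distrib_left)
  also have "\<dots> = (\<Sum>j\<in>UNIV. \<Sum>i\<in>UNIV. cnj (x $ i) * (M $ i $ j * y $ j))"
    by (rule sum.swap)
  also have "\<dots> = cinner (cadj M *v x) y"
    by (simp add: cinner_def matrix_vector_mult_def cadj_def sum_distrib_right; rule sum.cong;
        simp; rule sum.cong; simp_all add: algebra_simps)
  finally show ?thesis .
qed

lemma self_adjoint_cinner: "self_adjoint M \<Longrightarrow> cinner x (M *v y) = cinner (M *v x) y"
  by (simp add: cinner_adjoint self_adjoint_def)

lemma scaleR_eq_of_real_smult: "r *\<^sub>R x = (of_real r :: complex) *s x"
  by (simp add: vec_eq_iff of_real_def)

lemma matrix_vector_mult_smult: "M *v (c *s x) = c *s (M *v x)"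
  for M :: "'a::comm_ring_1^'n^'m"
  by (simp add: vec_eq_iff matrix_vector_mult_def sum_distrib_left algebra_simps)

lemma matrix_vector_mult_scaleR_complex: "M *v (r *\<^sub>R x) = r *\<^sub>R (M *v x)"
  for M :: "complex^'n^'m"
  by (simp add: scaleR_eq_of_real_smult matrix_vector_mult_smult)

lemma matrix_vector_mult_sum: "M *v (\<Sum>b\<in>S. f b) = (\<Sum>b\<in>S. M *v f b)"
  for M :: "'a::comm_ring_1^'n^'m"
  by (induct S rule: infinite_finite_induct) (simp_all add: matrix_vector_right_distrib)

lemma continuous_on_cinner_right: "continuous_on S (\<lambda>x. cinner b x)"
  unfolding cinner_def by (intro continuous_intros)

lemma herm_form_eq_cinner: "herm_form M x = cinner x (M *v x)"
  by (simp add: herm_form_def cinner_def)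

lemma self_adjoint_herm_form_real:
  "self_adjoint M \<Longrightarrow> of_real (Re (herm_form M x)) = herm_form M x"
  by (metis Reals_cnj_iff cnj_cinner complex_is_Real_iff herm_form_eq_cinner of_real_Re
        self_adjoint_cinner)

lemma herm_form_scaleR: "herm_form M (r *\<^sub>R x) = of_real (r\<^sup>2) * herm_form M x"
  by (simp add: herm_form_eq_cinner scaleR_eq_of_real_smult matrix_vector_mult_smult
      cinner_smult_left cinner_smult_right power2_eq_square)

lemma herm_form_add: "herm_form (X + Y) z = herm_form X z + herm_form Y z"
  by (simp add: herm_form_eq_cinner matrix_vector_mult_add_rdistrib cinner_add_right)

lemma herm_form_diff: "herm_form (X - Y) z = herm_form X z - herm_form Y z"
  by (simp add: herm_form_eq_cinner matrix_vector_mult_diff_rdistrib cinner_diff_right)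

lemma herm_form_scaleR_matrix: "herm_form (r *\<^sub>R X) z = of_real r * herm_form X z"
proof -
  have "(r *\<^sub>R X) *v z = r *\<^sub>R (X *v z)"
    by (simp add: vec_eq_iff matrix_vector_mult_def scaleR_sum_right)
  then show ?thesis
    by (simp add: herm_form_eq_cinner scaleR_eq_of_real_smult cinner_smult_right)
qed

lemma herm_form_scalar_matrix:
  "herm_form ((of_real b :: complex^'n) *s mat 1) z = of_real (b * (norm z)\<^sup>2)"
proof -
  have "((of_real b :: complex^'n) *s mat 1) *v z = (of_real b :: complex) *s z"
    by (simp add: vec_eq_iff matrix_vector_mult_def mat_def of_real_def if_distrib if_distribR
        sum.delta cong: if_cong)
  then show ?thesis
    by (simp add: herm_form_eq_cinner cinner_smult_right cinner_self)
qed

lemma bounded_linear_Re_herm_form: "bounded_linear (\<lambda>X. Re (herm_form X z))"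
  unfolding linear_conv_bounded_linear[symmetric]
  by (rule linearI) (simp_all add: herm_form_add herm_form_scaleR_matrix)

lemma continuous_on_herm_form: "continuous_on S (\<lambda>x. herm_form M x)"
  unfolding herm_form_def matrix_vector_mult_def by (intro continuous_intros)

lemma loewner_le_scalar_matrix_left:
  "loewner_le ((of_real b :: complex^'n) *s mat 1) Y \<Longrightarrow> b * (norm z)\<^sup>2 \<le> Re (herm_form Y z)"
  by (simp add: loewner_le_def herm_form_diff herm_form_scalar_matrix)

lemma loewner_le_scalar_matrix_right:
  "loewner_le Y ((of_real b :: complex^'n) *s mat 1) \<Longrightarrow> Re (herm_form Y z) \<le> b * (norm z)\<^sup>2"
  by (simp add: loewner_le_def herm_form_diff herm_form_scalar_matrix)

section \<open>Matrix algebra and operator norms\<close>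

lemma matrix_add_rdistrib: "(A + B) ** C = A ** C + B ** C"
  by (simp add: vec_eq_iff matrix_matrix_mult_def sum.distrib distrib_right)

lemma matrix_scaleR_mult: "(r *\<^sub>R A) ** B = r *\<^sub>R (A ** B)"
  for A :: "complex^'n^'m" and B :: "complex^'k^'n"
  by (simp add: vec_eq_iff matrix_matrix_mult_def scaleR_sum_right)

lemma of_real_smult_matrix: "(of_real r :: complex^'n) *s A = r *\<^sub>R A"
  for A :: "complex^'n^'m"
  by (simp add: vec_eq_iff of_real_def)

lemma bounded_linear_matrix_mult_right: "bounded_linear (\<lambda>A::complex^'n^'m. A ** B)"
  unfolding linear_conv_bounded_linear[symmetric]
  by (intro linearI) (simp_all add: matrix_add_rdistrib matrix_scaleR_mult)

lemma invertible_matrix_inv: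
  fixes M :: "'a::semiring_1^'n^'n"
  assumes "invertible M"
  shows "M ** matrix_inv M = mat 1" "matrix_inv M ** M = mat 1"
  using assms unfolding invertible_def matrix_inv_def by (metis (mono_tags, lifting) someI_ex)+

lemma cadj_mult: "cadj (A ** B) = cadj B ** cadj A"
  for A :: "complex^'n^'m" and B :: "complex^'k^'n"
  by (simp add: vec_eq_iff cadj_def matrix_matrix_mult_def mult.commute)

lemma cadj_add: "cadj (A + B) = cadj A + cadj B"
  by (simp add: vec_eq_iff cadj_def)

lemma cadj_scaleR: "cadj (r *\<^sub>R A) = r *\<^sub>R cadj A"
  by (simp add: vec_eq_iff cadj_def)

lemma cadj_mat_1: "cadj (mat 1 :: complex^'n^'n) = mat 1"
  by (simp add: vec_eq_iff cadj_def mat_def)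

lemma self_adjoint_matrix_inv:
  fixes W :: "complex^'n^'n"
  assumes "self_adjoint W" "invertible W"
  shows "self_adjoint (matrix_inv W)"
proof -
  define N where "N = matrix_inv W"
  have NW: "N ** W = mat 1"
    using invertible_matrix_inv(2)[OF assms(2)] by (simp add: N_def)
  have "W ** cadj N = cadj (N ** W)"
    using assms(1) by (simp add: cadj_mult self_adjoint_def)
  then have WN': "W ** cadj N = mat 1"
    by (simp add: NW cadj_mat_1)
  have "cadj N = (N ** W) ** cadj N"
    by (simp add: NW)
  also have "\<dots> = N"
    by (simp only: matrix_mul_assoc[symmetric] WN' matrix_mul_rid)
  finally show ?thesis
    by (simp add: self_adjoint_def N_def)
qed

lemma invertible_if_loewner_ge_pos:
  fixes Z :: "complex^'n^'n"
  assumes "0 < b" "loewner_le (of_real b *s mat 1) Z"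
  shows "invertible Z"
proof -
  have "x = 0" if "Z *v x = 0" for x
  proof -
    have "b * (norm x)\<^sup>2 \<le> Re (herm_form Z x)"
      by (rule loewner_le_scalar_matrix_left[OF assms(2)])
    also have "\<dots> = 0"
      using that by (simp add: herm_form_eq_cinner)
    finally show ?thesis
      using \<open>0 < b\<close> by (simp add: mult_le_0_iff)
  qed
  then show ?thesis
    using matrix_left_invertible_ker invertible_left_inverse by blast
qed

lemma norm_matrix_vector_mult_sgn:
  fixes M :: "complex^'n^'n"
  shows "norm (M *v sgn x) = norm (M *v x) / norm x"
  by (simp add: sgn_div_norm matrix_vector_mult_scaleR_complex divide_inverse_commute)

lemma opnorm_attained:
  fixes M :: "complex^'n^'n"
  obtains y where "norm y = 1" "opnorm M = norm (M *v y)"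
proof -
  have "sphere (0::complex^'n) 1 \<noteq> {}"
    using vector_choose_size[of 1] by auto
  moreover have "continuous_on (sphere 0 1) (\<lambda>y. norm (M *v y))"
    by (intro continuous_intros)
  ultimately obtain y where y: "norm y = 1"
    and y_max: "\<And>x. norm x = 1 \<Longrightarrow> norm (M *v x) \<le> norm (M *v y)"
    using continuous_attains_sup[OF compact_sphere] by (metis mem_sphere_0)
  have "norm (M *v x) \<le> norm (M *v y) * norm x" for x
  proof (cases "x = 0")
    case False
    then have "norm (M *v sgn x) \<le> norm (M *v y)"
      by (intro y_max) (simp add: norm_sgn)
    with False show ?thesis
      by (simp add: norm_matrix_vector_mult_sgn divide_le_eq)
  qed simp
  then have "opnorm M \<le> norm (M *v y)"
    unfolding opnorm_def by (rule onorm_le)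
  moreover have "norm (M *v y) \<le> opnorm M"
    using onorm[OF matrix_vector_mul_bounded_linear, of M y] y by (simp add: opnorm_def)
  ultimately show ?thesis
    using y that by simp
qed

lemma opnorm_matrix_mult_le: "opnorm (A ** B) \<le> opnorm A * opnorm B"
  unfolding opnorm_def
  using onorm_compose[OF matrix_vector_mul_bounded_linear matrix_vector_mul_bounded_linear]
  by (simp add: o_def matrix_vector_mul_assoc)

section \<open>The spectral theorem for self-adjoint matrices\<close>

definition orthonormal :: "(complex^'n) set \<Rightarrow> bool" where
  "orthonormal B \<longleftrightarrow> (\<forall>b\<in>B. \<forall>b'\<in>B. cinner b b' = (if b = b' then 1 else 0))"

lemma orthonormal_subset: "orthonormal B \<Longrightarrow> C \<subseteq> B \<Longrightarrow> orthonormal C"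
  unfolding orthonormal_def by blast

lemma orthonormal_norm:
  assumes "orthonormal B" "b \<in> B"
  shows "norm b = 1"
proof -
  have "cinner b b = 1"
    using assms by (simp add: orthonormal_def)
  then have "(norm b)\<^sup>2 = 1"
    by (metis cinner_self of_real_eq_1_iff)
  then show ?thesis
    using norm_ge_zero[of b] by (simp add: power2_eq_1_iff)
qed

lemma cinner_orthonormal_comb:
  assumes "finite B" "orthonormal B" "b \<in> B"
  shows "cinner b (\<Sum>b'\<in>B. f b' *s b') = f b"
proof -
  have "cinner b (\<Sum>b'\<in>B. f b' *s b') = (\<Sum>b'\<in>B. f b' * (if b = b' then 1 else 0))"
    using assms by (auto simp: cinner_sum_right cinner_smult_right orthonormal_def intro!: sum.cong)
  also have "\<dots> = f b"
    using assms by (simp add: if_distrib sum.delta cong: if_cong)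
  finally show ?thesis .
qed

lemma cinner_orthonormal_combs:
  assumes "finite B" "orthonormal B"
  shows "cinner (\<Sum>b\<in>B. f b *s b) (\<Sum>b\<in>B. g b *s b) = (\<Sum>b\<in>B. cnj (f b) * g b)"
  using assms by (simp add: cinner_sum_left cinner_smult_left cinner_orthonormal_comb)

lemma norm_orthonormal_comb:
  assumes "finite B" "orthonormal B"
  shows "(norm (\<Sum>b\<in>B. g b *s b))\<^sup>2 = (\<Sum>b\<in>B. (cmod (g b))\<^sup>2)"
proof -
  let ?z = "\<Sum>b\<in>B. g b *s b"
  have "of_real ((norm ?z)\<^sup>2) = cinner ?z ?z"
    by (simp only: cinner_self)
  also have "\<dots> = (\<Sum>b\<in>B. cnj (g b) * g b)"
    by (rule cinner_orthonormal_combs[OF assms])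
  also have "\<dots> = (\<Sum>b\<in>B. of_real ((cmod (g b))\<^sup>2))"
    by (simp add: complex_norm_square mult.commute del: of_real_power)
  finally have "of_real ((norm ?z)\<^sup>2) = (of_real (\<Sum>b\<in>B. (cmod (g b))\<^sup>2) :: complex)"
    by (simp only: of_real_sum)
  then show ?thesis
    by (simp only: of_real_eq_iff)
qed

lemma orthonormal_independent:
  assumes "orthonormal B"
  shows "vec.independent B"
  unfolding vec.independent_explicit_finite_subsets
proof (intro allI impI ballI)
  fix S u v
  assume S: "S \<subseteq> B" "finite S" and comb: "(\<Sum>v\<in>S. u v *s v) = 0" and v: "v \<in> S"
  have "u v = cinner v (\<Sum>v\<in>S. u v *s v)"
    using cinner_orthonormal_comb[OF S(2) orthonormal_subset[OF assms S(1)] v] by simp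
  then show "u v = 0"
    using comb by simp
qed

lemma vec_independent_card_le:
  assumes "vec.independent (B :: (complex^'n) set)"
  shows "finite B" "card B \<le> CARD('n)"
proof -
  have "finite B \<and> card B \<le> vec.dim B"
    using vec.independent_bound_general[OF assms] .
  moreover have "vec.dim B \<le> CARD('n)"
    using vec.dim_subset_UNIV[of B] by (simp add: card_cart_basis vec.dimension_def)
  ultimately show "finite B" "card B \<le> CARD('n)"
    by auto
qed

lemma orthonormal_insert:
  assumes B: "orthonormal B" and u: "norm u = 1" "\<forall>b\<in>B. cinner b u = 0"
  shows "orthonormal (insert u B)" "u \<notin> B"
proof -
  have "cinner u u = 1"
    using u(1) by (simp add: cinner_self)
  moreover have "cinner u b = 0" if "b \<in> B" for b
    using u(2) that cnj_cinner[of b u] by simp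
  ultimately show "u \<notin> B" "orthonormal (insert u B)"
    using B u(2) unfolding orthonormal_def by fastforce+
qed

lemma vec_subspace_scaleR: "vec.subspace W \<Longrightarrow> x \<in> W \<Longrightarrow> r *\<^sub>R x \<in> W"
  for W :: "(complex^'n) set"
  by (simp add: scaleR_eq_of_real_smult vec.subspace_scale)

lemma linear_le_quadratic_imp_zero:
  fixes a b :: real
  assumes "\<And>t. 2 * t * a \<le> t\<^sup>2 * b"
  shows "a = 0"
proof -
  define d where "d = \<bar>b\<bar> + 1"
  have "d > 0" "b < 2 * d"
    by (auto simp: d_def)
  have "2 * (a / d) * a \<le> (a / d)\<^sup>2 * b"
    by (rule assms)
  then have "a\<^sup>2 * (2 * d - b) \<le> 0"
    using \<open>d > 0\<close> by (simp add: power2_eq_square field_simps)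
  with \<open>b < 2 * d\<close> show "a = 0"
    by (simp add: mult_le_0_iff)
qed

text \<open>First-order condition at a maximizer of the Rayleigh quotient: perturbing \<open>u\<close> to
  \<open>u + t v\<close> gives \<open>2t Re\<langle>v, Mu\<rangle> \<le> O(t\<^sup>2)\<close>, and the direction \<open>\<i> v\<close> handles the imaginary part.\<close>

lemma rayleigh_maximizer_orthogonal:
  fixes M :: "complex^'n^'n"
  assumes sa: "self_adjoint M" and W: "vec.subspace W"
    and u: "u \<in> W" "norm u = 1"
    and max: "\<And>x. x \<in> W \<Longrightarrow> Re (herm_form M x) \<le> Re (herm_form M u) * (norm x)\<^sup>2"
    and v: "v \<in> W" "cinner u v = 0"
  shows "cinner v (M *v u) = 0"
proof -
  have Re_zero: "Re (cinner w (M *v u)) = 0" if w: "w \<in> W" "cinner u w = 0" for w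
  proof (rule linear_le_quadratic_imp_zero)
    fix t :: real
    let ?x = "u + t *\<^sub>R w"
    have "cinner u (M *v w) = cnj (cinner w (M *v u))"
      by (simp add: self_adjoint_cinner[OF sa] cnj_cinner)
    then have "Re (herm_form M ?x)
        = Re (herm_form M u) + 2 * t * Re (cinner w (M *v u)) + t\<^sup>2 * Re (herm_form M w)"
      by (simp add: herm_form_eq_cinner scaleR_eq_of_real_smult matrix_vector_right_distrib
          matrix_vector_mult_smult cinner_add_left cinner_add_right cinner_smult_left
          cinner_smult_right power2_eq_square algebra_simps)
    moreover have "cinner w u = 0"
      using w cnj_cinner[of u w] by simp
    then have expand: "cinner ?x ?x = cinner u u + of_real (t\<^sup>2) * cinner w w"
      using w by (simp add: scaleR_eq_of_real_smult cinner_add_left cinner_add_right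
          cinner_smult_left cinner_smult_right power2_eq_square)
    have "(norm ?x)\<^sup>2 = 1 + t\<^sup>2 * (norm w)\<^sup>2"
      using arg_cong[OF expand, of Re] u by (simp add: Re_cinner_self)
    moreover have "?x \<in> W"
      using W u w by (simp add: vec.subspace_add vec_subspace_scaleR)
    ultimately show "2 * t * Re (cinner w (M *v u))
        \<le> t\<^sup>2 * (Re (herm_form M u) * (norm w)\<^sup>2 - Re (herm_form M w))"
      using max[of ?x] by (simp add: algebra_simps)
  qed
  have "Re (cinner (\<i> *s v) (M *v u)) = 0"
    using v W by (intro Re_zero) (simp_all add: vec.subspace_scale cinner_smult_right)
  then show ?thesis
    using Re_zero[OF v] by (simp add: cinner_smult_left complex_eq_iff)
qed

lemma rayleigh_maximizer_eigenvector:
  fixes M :: "complex^'n^'n"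
  assumes sa: "self_adjoint M" and W: "vec.subspace W"
    and invariant: "\<And>x. x \<in> W \<Longrightarrow> M *v x \<in> W"
    and u: "u \<in> W" "norm u = 1"
    and max: "\<And>x. x \<in> W \<Longrightarrow> Re (herm_form M x) \<le> Re (herm_form M u) * (norm x)\<^sup>2"
  shows "M *v u = of_real (Re (herm_form M u)) *s u"
proof -
  define w where "w = M *v u - herm_form M u *s u"
  have "cinner u u = 1"
    using u by (simp add: cinner_self)
  then have "cinner u w = 0"
    by (simp add: w_def cinner_diff_right cinner_smult_right herm_form_eq_cinner)
  moreover have "w \<in> W"
    using W u invariant by (simp add: w_def vec.subspace_diff vec.subspace_scale)
  ultimately have "cinner w (M *v u) = 0" "cinner w u = 0"
    using rayleigh_maximizer_orthogonal[OF sa W u max] cnj_cinner[of u w] by auto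
  then have "cinner w w = 0"
    by (simp add: w_def cinner_diff_right cinner_smult_right)
  then show ?thesis
    by (simp add: w_def self_adjoint_herm_form_real[OF sa])
qed

lemma rayleigh_maximizer_exists:
  fixes M :: "complex^'n^'n"
  assumes W: "vec.subspace W" "closed W" and w0: "w0 \<in> W" "w0 \<noteq> 0"
  obtains u where "u \<in> W" "norm u = 1"
    "\<And>x. x \<in> W \<Longrightarrow> Re (herm_form M x) \<le> Re (herm_form M u) * (norm x)\<^sup>2"
proof -
  have "compact (sphere 0 1 \<inter> W)"
    using W(2) by (intro compact_Int_closed compact_sphere)
  moreover have "sgn w0 \<in> sphere 0 1 \<inter> W"
    using w0 W(1) by (simp add: sgn_div_norm vec_subspace_scaleR norm_sgn)
  moreover have "continuous_on (sphere 0 1 \<inter> W) (\<lambda>x. Re (herm_form M x))"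
    by (intro continuous_intros continuous_on_herm_form)
  ultimately obtain u where u: "u \<in> sphere 0 1 \<inter> W"
    and u_max: "\<And>y. y \<in> sphere 0 1 \<inter> W \<Longrightarrow> Re (herm_form M y) \<le> Re (herm_form M u)"
    using continuous_attains_sup[of "sphere 0 1 \<inter> W" "\<lambda>x. Re (herm_form M x)"] by blast
  have "Re (herm_form M x) \<le> Re (herm_form M u) * (norm x)\<^sup>2" if "x \<in> W" for x
  proof (cases "x = 0")
    case False
    then have "Re (herm_form M (sgn x)) \<le> Re (herm_form M u)"
      using that W(1) by (intro u_max) (simp add: sgn_div_norm vec_subspace_scaleR norm_sgn)
    then show ?thesis
      using False by (simp add: sgn_div_norm herm_form_scaleR power_divide field_simps)
  qed (simp add: herm_form_def)
  with u that show ?thesis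
    by auto
qed

lemma self_adjoint_eigenvector_orthogonal:
  fixes M :: "complex^'n^'n"
  assumes sa: "self_adjoint M"
    and eigen: "\<And>b. b \<in> B \<Longrightarrow> M *v b = of_real (l b) *s b"
    and w0: "w0 \<noteq> 0" "\<And>b. b \<in> B \<Longrightarrow> cinner b w0 = 0"
  shows "\<exists>u. norm u = 1 \<and> (\<forall>b\<in>B. cinner b u = 0) \<and> M *v u = of_real (Re (herm_form M u)) *s u"
proof -
  define W where "W = {x. \<forall>b\<in>B. cinner b x = 0}"
  have W: "vec.subspace W"
    by (auto simp: vec.subspace_def W_def cinner_add_right cinner_smult_right)
  have invariant: "M *v x \<in> W" if "x \<in> W" for x
    using that eigen by (simp add: W_def self_adjoint_cinner[OF sa] cinner_smult_left)
  have "closed {x. cinner b x = 0}" for b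
    using closed_Collect_eq[OF continuous_on_cinner_right continuous_on_const] .
  moreover have "W = (\<Inter>b\<in>B. {x. cinner b x = 0})"
    by (auto simp: W_def)
  ultimately have "closed W"
    by (auto intro!: closed_INT)
  moreover have "w0 \<in> W"
    using w0 by (simp add: W_def)
  ultimately obtain u where u: "u \<in> W" "norm u = 1"
    and "\<And>x. x \<in> W \<Longrightarrow> Re (herm_form M x) \<le> Re (herm_form M u) * (norm x)\<^sup>2"
    using rayleigh_maximizer_exists[OF W _ _ w0(1)] by blast
  then have "M *v u = of_real (Re (herm_form M u)) *s u"
    by (intro rayleigh_maximizer_eigenvector[OF sa W invariant])
  with u show ?thesis
    by (auto simp: W_def)
qed

definition orthonormal_eigenbasis ::
    "complex^'n^'n \<Rightarrow> (complex^'n \<Rightarrow> real) \<Rightarrow> (complex^'n) set \<Rightarrow> bool" where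
  "orthonormal_eigenbasis M l B \<longleftrightarrow> finite B \<and> orthonormal B
     \<and> (\<forall>b\<in>B. M *v b = of_real (l b) *s b) \<and> (\<forall>z. z = (\<Sum>b\<in>B. cinner b z *s b))"

text \<open>A maximal orthonormal family of eigenvectors is a basis: otherwise the orthogonal complement
  of its span, which is invariant, would contain a further unit eigenvector.\<close>

theorem self_adjoint_orthonormal_eigenbasis:
  fixes M :: "complex^'n^'n"
  assumes sa: "self_adjoint M"
  shows "\<exists>B. orthonormal_eigenbasis M (\<lambda>b. Re (herm_form M b)) B"
proof -
  define P where "P B \<longleftrightarrow> orthonormal B \<and> (\<forall>b\<in>B. M *v b = of_real (Re (herm_form M b)) *s b)"
    for B :: "(complex^'n) set"
  have P_card: "finite B \<and> card B \<le> CARD('n)" if "P B" for B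
    using that vec_independent_card_le[OF orthonormal_independent] by (auto simp: P_def)
  have ex_empty: "\<exists>B. P B \<and> card B = 0"
    by (intro exI[of _ "{}"]) (simp add: P_def orthonormal_def)
  have card_bound: "\<forall>k. (\<exists>B. P B \<and> card B = k) \<longrightarrow> k \<le> CARD('n)"
    using P_card by blast
  obtain k where k: "\<exists>B. P B \<and> card B = k" "\<forall>k'. (\<exists>B. P B \<and> card B = k') \<longrightarrow> k' \<le> k"
    using Nat.ex_has_greatest_nat[OF ex_empty card_bound] by blast
  then obtain B where B: "P B" "card B = k"
    by blast
  have k_max: "card B' \<le> k" if "P B'" for B'
    using k(2) that by blast
  have "finite B"
    using P_card[OF B(1)] by simp
  have "z = (\<Sum>b\<in>B. cinner b z *s b)" for z
  proof (rule ccontr)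
    assume "z \<noteq> (\<Sum>b\<in>B. cinner b z *s b)"
    moreover have "cinner b (z - (\<Sum>b\<in>B. cinner b z *s b)) = 0" if "b \<in> B" for b
      using cinner_orthonormal_comb[OF \<open>finite B\<close> _ that] B(1) by (simp add: P_def cinner_diff_right)
    ultimately obtain u where u: "norm u = 1" "\<forall>b\<in>B. cinner b u = 0"
      and u_eigen: "M *v u = of_real (Re (herm_form M u)) *s u"
      using self_adjoint_eigenvector_orthogonal[OF sa, of B "\<lambda>b. Re (herm_form M b)"
          "z - (\<Sum>b\<in>B. cinner b z *s b)"] B(1)
      by (auto simp: P_def)
    have "orthonormal (insert u B)" and "u \<notin> B"
      using orthonormal_insert[of B u] B(1) u by (simp_all add: P_def)
    then have "card (insert u B) \<le> k"
      using B(1) u_eigen k_max[of "insert u B"] by (simp add: P_def)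
    with \<open>u \<notin> B\<close> show False
      using B(2) \<open>finite B\<close> by simp
  qed
  then show ?thesis
    using B(1) \<open>finite B\<close> by (auto simp: orthonormal_eigenbasis_def P_def)
qed

lemma matrix_vector_mult_eigen_comb:
  fixes M :: "complex^'n^'n"
  assumes "\<And>b. b \<in> S \<Longrightarrow> M *v b = of_real (l b) *s b"
  shows "M *v (\<Sum>b\<in>S. g b *s b) = (\<Sum>b\<in>S. (g b * of_real (l b)) *s b)"
  using assms by (simp add: matrix_vector_mult_sum matrix_vector_mult_smult vector_smult_assoc)

lemma herm_form_eigen_comb:
  assumes "finite S" "orthonormal S" "\<And>b. b \<in> S \<Longrightarrow> M *v b = of_real (l b) *s b"
  shows "Re (herm_form M (\<Sum>b\<in>S. g b *s b)) = (\<Sum>b\<in>S. l b * (cmod (g b))\<^sup>2)"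
proof -
  have "herm_form M (\<Sum>b\<in>S. g b *s b) = (\<Sum>b\<in>S. cnj (g b) * (g b * of_real (l b)))"
    by (simp add: herm_form_eq_cinner matrix_vector_mult_eigen_comb[OF assms(3)]
        cinner_orthonormal_combs[OF assms(1,2)])
  also have "\<dots> = (\<Sum>b\<in>S. of_real (l b * (cmod (g b))\<^sup>2))"
    by (simp add: complex_norm_square ac_simps del: of_real_power)
  finally show ?thesis
    by (simp add: Re_sum)
qed

lemma norm_matrix_vector_mult_eigen_comb:
  assumes "finite S" "orthonormal S" "\<And>b. b \<in> S \<Longrightarrow> M *v b = of_real (l b) *s b"
  shows "(norm (M *v (\<Sum>b\<in>S. g b *s b)))\<^sup>2 = (\<Sum>b\<in>S. (l b)\<^sup>2 * (cmod (g b))\<^sup>2)"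
  by (simp add: matrix_vector_mult_eigen_comb[OF assms(3)] norm_orthonormal_comb[OF assms(1,2)]
      norm_mult power_mult_distrib mult.commute)

lemma
  assumes "orthonormal_eigenbasis M l B"
  shows eigenbasis_herm_form: "Re (herm_form M z) = (\<Sum>b\<in>B. l b * (cmod (cinner b z))\<^sup>2)"
    and eigenbasis_norm: "(norm z)\<^sup>2 = (\<Sum>b\<in>B. (cmod (cinner b z))\<^sup>2)"
    and eigenbasis_norm_matrix_vector_mult:
      "(norm (M *v z))\<^sup>2 = (\<Sum>b\<in>B. (l b)\<^sup>2 * (cmod (cinner b z))\<^sup>2)"
proof -
  have B: "finite B" "orthonormal B" "\<And>b. b \<in> B \<Longrightarrow> M *v b = of_real (l b) *s b"
    and z: "(\<Sum>b\<in>B. cinner b z *s b) = z"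
    using assms by (auto simp: orthonormal_eigenbasis_def)
  show "Re (herm_form M z) = (\<Sum>b\<in>B. l b * (cmod (cinner b z))\<^sup>2)"
    using herm_form_eigen_comb[OF B, of "\<lambda>b. cinner b z"] by (simp only: z)
  show "(norm z)\<^sup>2 = (\<Sum>b\<in>B. (cmod (cinner b z))\<^sup>2)"
    using norm_orthonormal_comb[OF B(1,2), of "\<lambda>b. cinner b z"] by (simp only: z)
  show "(norm (M *v z))\<^sup>2 = (\<Sum>b\<in>B. (l b)\<^sup>2 * (cmod (cinner b z))\<^sup>2)"
    using norm_matrix_vector_mult_eigen_comb[OF B, of "\<lambda>b. cinner b z"] by (simp only: z)
qed

lemma eigenbasis_small_eigenvalue:
  assumes B: "orthonormal_eigenbasis M l B" and v: "v \<noteq> 0" "norm (M *v v) \<le> c * norm v"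
  shows "\<exists>b\<in>B. \<bar>l b\<bar> \<le> c"
proof (rule ccontr)
  assume "\<not> (\<exists>b\<in>B. \<bar>l b\<bar> \<le> c)"
  then have "c < \<bar>l b\<bar>" if "b \<in> B" for b
    using that by auto
  moreover have "0 \<le> c * norm v"
    by (rule order_trans[OF norm_ge_zero v(2)])
  then have "0 \<le> c"
    using v(1) by (simp add: zero_le_mult_iff)
  ultimately have large: "c\<^sup>2 < (l b)\<^sup>2" if "b \<in> B" for b
    using that power_strict_mono[of c "\<bar>l b\<bar>" 2] by simp
  have fin: "finite B"
    using B by (simp add: orthonormal_eigenbasis_def)
  have "\<exists>b\<in>B. cinner b v \<noteq> 0"
  proof (rule ccontr)
    assume "\<not> (\<exists>b\<in>B. cinner b v \<noteq> 0)"
    then have "(norm v)\<^sup>2 = 0"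
      by (simp add: eigenbasis_norm[OF B])
    with v(1) show False
      by simp
  qed
  then obtain b0 where b0: "b0 \<in> B" "cinner b0 v \<noteq> 0"
    by blast
  have "(c * norm v)\<^sup>2 < (\<Sum>b\<in>B. (l b)\<^sup>2 * (cmod (cinner b v))\<^sup>2)"
    unfolding eigenbasis_norm[OF B] power_mult_distrib sum_distrib_left
    using large b0 by (intro sum_strict_mono_ex1[OF fin] ballI bexI[of _ b0] mult_right_mono)
      (auto intro: mult_strict_right_mono less_imp_le)
  also have "\<dots> = (norm (M *v v))\<^sup>2"
    by (simp add: eigenbasis_norm_matrix_vector_mult[OF B])
  finally show False
    using power_mono[OF v(2) norm_ge_zero, of 2] by linarith
qed

lemma opnorm_le_if_loewner_between:
  fixes Z :: "complex^'n^'n"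
  assumes sa: "self_adjoint Z" and "0 \<le> b\<^sub>1"
    and lower: "loewner_le (of_real b\<^sub>1 *s mat 1) Z" and upper: "loewner_le Z (of_real b\<^sub>2 *s mat 1)"
  shows "opnorm Z \<le> b\<^sub>2"
proof -
  obtain B where B: "orthonormal_eigenbasis Z (\<lambda>b. Re (herm_form Z b)) B"
    using self_adjoint_orthonormal_eigenbasis[OF sa] by blast
  have eigenvalue_sq: "(Re (herm_form Z b))\<^sup>2 \<le> b\<^sub>2\<^sup>2" if "b \<in> B" for b
  proof -
    have "norm b = 1"
      using B that orthonormal_norm by (auto simp: orthonormal_eigenbasis_def)
    then have "b\<^sub>1 \<le> Re (herm_form Z b)" "Re (herm_form Z b) \<le> b\<^sub>2"
      using loewner_le_scalar_matrix_left[OF lower, of b]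
        loewner_le_scalar_matrix_right[OF upper, of b] by simp_all
    then show ?thesis
      using \<open>0 \<le> b\<^sub>1\<close> by (intro power_mono) auto
  qed
  have "(norm (Z *v x))\<^sup>2 \<le> (b\<^sub>2 * norm x)\<^sup>2" for x
  proof -
    have "(norm (Z *v x))\<^sup>2 = (\<Sum>b\<in>B. (Re (herm_form Z b))\<^sup>2 * (cmod (cinner b x))\<^sup>2)"
      by (rule eigenbasis_norm_matrix_vector_mult[OF B])
    also have "\<dots> \<le> (\<Sum>b\<in>B. b\<^sub>2\<^sup>2 * (cmod (cinner b x))\<^sup>2)"
      using eigenvalue_sq by (intro sum_mono mult_right_mono) auto
    also have "\<dots> = (b\<^sub>2 * norm x)\<^sup>2"
      by (simp add: eigenbasis_norm[OF B] power_mult_distrib sum_distrib_left)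
    finally show ?thesis .
  qed
  moreover obtain x0 :: "complex^'n" where "norm x0 = 1"
    using vector_choose_size[of 1] by auto
  then have "0 \<le> b\<^sub>2"
    using loewner_le_scalar_matrix_left[OF lower, of x0]
      loewner_le_scalar_matrix_right[OF upper, of x0] \<open>0 \<le> b\<^sub>1\<close> by simp
  ultimately have "norm (Z *v x) \<le> b\<^sub>2 * norm x" for x
    by (meson power2_le_imp_le mult_nonneg_nonneg norm_ge_zero)
  then show ?thesis
    unfolding opnorm_def by (rule onorm_le)
qed

section \<open>Counting eigenvalues below a level\<close>

text \<open>The largest size of an independent \<open>L\<close> with \<open>herm_le_on M c L\<close> is the number of eigenvalues
  \<open>\<le> c\<close> of \<open>M\<close>, and similarly for \<open>herm_less_on\<close> and eigenvalues \<open>< c\<close>; phrasing the counts this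
  way (min-max) lets us compare different matrices without choosing eigenbases.\<close>

definition herm_le_on :: "complex^'n^'n \<Rightarrow> real \<Rightarrow> (complex^'n) set \<Rightarrow> bool" where
  "herm_le_on M c L \<longleftrightarrow>
     vec.independent L \<and> (\<forall>z\<in>vec.span L. Re (herm_form M z) \<le> c * (norm z)\<^sup>2)"

definition herm_less_on :: "complex^'n^'n \<Rightarrow> real \<Rightarrow> (complex^'n) set \<Rightarrow> bool" where
  "herm_less_on M c L \<longleftrightarrow>
     vec.independent L \<and> (\<forall>z\<in>vec.span L. z \<noteq> 0 \<longrightarrow> Re (herm_form M z) < c * (norm z)\<^sup>2)"

lemma herm_le_on_eigenvectors:
  assumes B: "orthonormal_eigenbasis M l B"
  shows "herm_le_on M c {b\<in>B. l b \<le> c}"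
proof -
  let ?L = "{b\<in>B. l b \<le> c}"
  have L: "finite ?L" "orthonormal ?L" "\<And>b. b \<in> ?L \<Longrightarrow> M *v b = of_real (l b) *s b"
    using B by (auto simp: orthonormal_eigenbasis_def intro: orthonormal_subset[of B])
  have "Re (herm_form M z) \<le> c * (norm z)\<^sup>2" if "z \<in> vec.span ?L" for z
  proof -
    obtain g where z: "z = (\<Sum>b\<in>?L. g b *s b)"
      using \<open>z \<in> vec.span ?L\<close> vec.span_finite[OF L(1)] by auto
    have "Re (herm_form M z) = (\<Sum>b\<in>?L. l b * (cmod (g b))\<^sup>2)"
      unfolding z by (rule herm_form_eigen_comb[OF L])
    also have "\<dots> \<le> (\<Sum>b\<in>?L. c * (cmod (g b))\<^sup>2)"
      by (intro sum_mono mult_right_mono) auto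
    also have "\<dots> = c * (norm z)\<^sup>2"
      by (simp add: z norm_orthonormal_comb[OF L(1,2)] sum_distrib_left)
    finally show ?thesis .
  qed
  then show ?thesis
    using orthonormal_independent[OF L(2)] by (simp add: herm_le_on_def)
qed

lemma eigenbasis_herm_form_lower_bound:
  assumes B: "orthonormal_eigenbasis M l B"
    and z: "\<And>b. b \<in> B \<Longrightarrow> l b < c \<Longrightarrow> cinner b z = 0"
  shows "c * (norm z)\<^sup>2 \<le> Re (herm_form M z)"
proof -
  have "c * (norm z)\<^sup>2 = (\<Sum>b\<in>B. c * (cmod (cinner b z))\<^sup>2)"
    by (simp add: eigenbasis_norm[OF B] sum_distrib_left)
  also have "\<dots> \<le> (\<Sum>b\<in>B. l b * (cmod (cinner b z))\<^sup>2)"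
  proof (rule sum_mono)
    fix b assume "b \<in> B"
    then show "c * (cmod (cinner b z))\<^sup>2 \<le> l b * (cmod (cinner b z))\<^sup>2"
      using z[of b] by (cases "l b < c") (auto intro: mult_right_mono)
  qed
  also have "\<dots> = Re (herm_form M z)"
    by (simp add: eigenbasis_herm_form[OF B])
  finally show ?thesis .
qed

lemma vec_linear_cinner_expansion:
  "Vector_Spaces.linear (*s) (*s) (\<lambda>z. \<Sum>b\<in>C. cinner b z *s b)"
proof -
  have "Vector_Spaces.linear (*s) (*s) (\<lambda>z. cinner b z *s b)" for b :: "complex^'n"
    by (simp add: Vector_Spaces.linear_iff vec.vector_space_axioms cinner_add_right
        cinner_smult_right vector_sadd_rdistrib vector_smult_assoc)
  then show ?thesis
    by (intro vec.linear_compose_sum) auto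
qed

lemma herm_less_on_card_le:
  assumes B: "orthonormal_eigenbasis M l B" and L: "herm_less_on M c L"
  shows "card L \<le> card {b\<in>B. l b < c}"
proof -
  define Bc where "Bc = {b\<in>B. l b < c}"
  have Bc: "finite Bc" "orthonormal Bc"
    using B by (auto simp: orthonormal_eigenbasis_def Bc_def intro: orthonormal_subset[of B])
  define proj where "proj z = (\<Sum>b\<in>Bc. cinner b z *s b)" for z
  have lin: "Vector_Spaces.linear (*s) (*s) proj"
    unfolding proj_def[abs_def] by (rule vec_linear_cinner_expansion)
  have "z = 0" if "z \<in> vec.span L" "proj z = 0" for z
  proof (rule ccontr)
    assume "z \<noteq> 0"
    have "cinner b z = 0" if "b \<in> B" "l b < c" for b
      using cinner_orthonormal_comb[OF Bc, of b "\<lambda>b. cinner b z"] \<open>proj z = 0\<close> that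
      by (simp add: proj_def Bc_def)
    then have "c * (norm z)\<^sup>2 \<le> Re (herm_form M z)"
      by (rule eigenbasis_herm_form_lower_bound[OF B])
    moreover have "Re (herm_form M z) < c * (norm z)\<^sup>2"
      using L \<open>z \<in> vec.span L\<close> \<open>z \<noteq> 0\<close> by (simp add: herm_less_on_def)
    ultimately show False
      by simp
  qed
  then have inj: "inj_on proj (vec.span L)"
    using vec.linear_inj_on_iff_eq_0[OF lin vec.subspace_span] by blast
  have "vec.independent (proj ` L)"
    using L vec.linear_independent_injective_image[OF lin _ inj] by (simp add: herm_less_on_def)
  moreover have "proj z \<in> vec.span Bc" for z
    unfolding proj_def by (rule vec.span_sum) (auto intro: vec.span_scale vec.span_base)
  then have "proj ` L \<subseteq> vec.span Bc"
    by auto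
  ultimately have "card (proj ` L) \<le> card Bc"
    using vec.independent_span_bound[OF Bc(1)] by blast
  moreover have "card (proj ` L) = card L"
    using inj vec.span_superset by (intro card_image) (auto intro: inj_on_subset)
  ultimately show ?thesis
    by (simp add: Bc_def)
qed

lemma self_adjoint_near_kernel_gap:
  fixes M :: "complex^'n^'n"
  assumes sa: "self_adjoint M" and v: "v \<noteq> 0" "norm (M *v v) \<le> c * norm v"
  shows "\<exists>L. herm_le_on M c L \<and> (\<forall>L'. herm_less_on M (- c) L' \<longrightarrow> card L' < card L)"
proof -
  obtain B where B: "orthonormal_eigenbasis M (\<lambda>b. Re (herm_form M b)) B"
    using self_adjoint_orthonormal_eigenbasis[OF sa] by blast
  let ?l = "\<lambda>b. Re (herm_form M b)"
  obtain b where b: "b \<in> B" "\<bar>?l b\<bar> \<le> c"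
    using eigenbasis_small_eigenvalue[OF B v] by blast
  have "{b\<in>B. ?l b < - c} \<subset> {b\<in>B. ?l b \<le> c}"
    using b by force
  moreover have "finite B"
    using B by (simp add: orthonormal_eigenbasis_def)
  ultimately have "card {b\<in>B. ?l b < - c} < card {b\<in>B. ?l b \<le> c}"
    by (intro psubset_card_mono) auto
  then show ?thesis
    using herm_le_on_eigenvectors[OF B] herm_less_on_card_le[OF B] le_less_trans by blast
qed

lemma herm_le_on_imp_herm_less_on:
  assumes L: "herm_le_on N c L"
    and MN: "\<And>z. Re (herm_form M z) + d * (norm z)\<^sup>2 \<le> Re (herm_form N z)"
    and "c - d < c'"
  shows "herm_less_on M c' L"
proof -
  have "Re (herm_form M z) < c' * (norm z)\<^sup>2" if "z \<in> vec.span L" "z \<noteq> 0" for z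
  proof -
    have "Re (herm_form N z) \<le> c * (norm z)\<^sup>2"
      using L that(1) by (simp add: herm_le_on_def)
    moreover have "(c - d) * (norm z)\<^sup>2 < c' * (norm z)\<^sup>2"
      using \<open>c - d < c'\<close> that(2) by (simp add: mult_strict_right_mono)
    ultimately show ?thesis
      using MN[of z] by (simp add: left_diff_distrib)
  qed
  then show ?thesis
    using L by (simp add: herm_le_on_def herm_less_on_def)
qed

section \<open>Separated points and Lebesgue measure\<close>

fun separated :: "real \<Rightarrow> real list \<Rightarrow> bool" where
  "separated d [] = True"
| "separated d [x] = True"
| "separated d (x # y # ys) = (d < y - x \<and> separated d (y # ys))"

lemma separated_length_beyond_Inf:
  assumes T: "T \<noteq> {}" "bdd_below T" "T \<subseteq> S"
    and bound: "\<And>xs. separated d xs \<Longrightarrow> set xs \<subseteq> S \<Longrightarrow> length xs \<le> Suc n"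
    and xs: "separated d xs" "set xs \<subseteq> S \<inter> {Inf T + d<..}"
  shows "length xs \<le> n"
proof (cases xs)
  case (Cons x rest)
  with xs have "Inf T < x - d"
    by auto
  then obtain s where "s \<in> T" "s < x - d"
    using cInf_less_iff[OF T(1,2)] by blast
  then have "separated d (s # xs)" "set (s # xs) \<subseteq> S"
    using xs T(3) Cons by auto
  then show ?thesis
    using bound by fastforce
qed simp

lemma emeasure_lebesgue_Icc: "a \<le> b \<Longrightarrow> emeasure lebesgue {a..b::real} = ennreal (b - a)"
  by (simp add: emeasure_completion)

text \<open>Greedy covering: the points of \<open>S \<inter> {t..}\<close> within \<open>d\<close> of its infimum lie in one interval of
  length \<open>d\<close>, and the remaining points admit only chains that are one element shorter.\<close>

lemma emeasure_separated_bound_Ici: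
  fixes S :: "real set"
  assumes "0 \<le> d" "S \<in> sets lebesgue"
    and "\<And>xs. separated d xs \<Longrightarrow> set xs \<subseteq> S \<Longrightarrow> length xs \<le> n"
  shows "emeasure lebesgue (S \<inter> {t..}) \<le> ennreal (real n * d)"
  using assms(2,3)
proof (induction n arbitrary: S t)
  case 0
  have "x \<notin> S" for x
    using "0.prems"(2)[of "[x]"] by auto
  then have "S = {}"
    by blast
  then show ?case
    by simp
next
  case (Suc n)
  let ?T = "S \<inter> {t..}"
  show ?case
  proof (cases "?T = {}")
    case False
    define a where "a = Inf ?T"
    have bdd: "bdd_below ?T"
      by (rule bdd_belowI[of _ t]) auto
    define S' where "S' = S \<inter> {a + d<..}"
    have S': "S' \<in> sets lebesgue"
      using Suc.prems(1) by (auto simp: S'_def intro: sets_completionI_sets)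
    have "emeasure lebesgue (S' \<inter> {a + d..}) \<le> ennreal (real n * d)"
      using separated_length_beyond_Inf[OF False bdd _ Suc.prems(2)]
      by (intro Suc.IH[OF S']) (auto simp: S'_def a_def)
    moreover have "S' \<inter> {a + d..} = S'"
      by (auto simp: S'_def)
    moreover have "?T \<subseteq> {a..a + d} \<union> S'"
      using cInf_lower[OF _ bdd] by (auto simp: S'_def a_def)
    then have "emeasure lebesgue ?T \<le> emeasure lebesgue {a..a + d} + emeasure lebesgue S'"
      using S' by (intro order_trans[OF emeasure_mono emeasure_subadditive]) auto
    ultimately have "emeasure lebesgue ?T \<le> ennreal d + ennreal (real n * d)"
      using assms(1) by (simp add: emeasure_lebesgue_Icc) (meson add_left_mono order_trans)
    then show ?thesis
      using assms(1) by (simp add: algebra_simps flip: ennreal_plus)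
  qed simp
qed

lemma emeasure_separated_bound:
  fixes S :: "real set"
  assumes "0 \<le> d" "S \<in> sets lebesgue"
    and "\<And>xs. separated d xs \<Longrightarrow> set xs \<subseteq> S \<Longrightarrow> length xs \<le> n"
  shows "emeasure lebesgue S \<le> ennreal (real n * d)"
proof -
  define T where "T k = S \<inter> {- real k..}" for k :: nat
  have "(\<Union>k. T k) = S"
    by (auto simp: T_def) (metis minus_le_iff real_arch_simple)
  moreover have "range T \<subseteq> sets lebesgue" "incseq T"
    using assms(2) by (auto simp: T_def incseq_def)
  then have "(SUP k. emeasure lebesgue (T k)) = emeasure lebesgue (\<Union>k. T k)"
    by (rule SUP_emeasure_incseq)
  moreover have "emeasure lebesgue (T k) \<le> ennreal (real n * d)" for k
    unfolding T_def by (rule emeasure_separated_bound_Ici[OF assms])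
  ultimately show ?thesis
    by (metis SUP_least)
qed

section \<open>Increasing families of self-adjoint matrices\<close>

lemma herm_form_increase_of_derivative:
  fixes M :: "real \<Rightarrow> complex^'n^'n"
  assumes M: "\<And>t. M differentiable at t"
    and M': "\<And>t. loewner_le (of_real \<beta> *s mat 1) (vector_derivative M (at t))"
    and "\<xi> \<le> \<eta>"
  shows "Re (herm_form (M \<xi>) z) + \<beta> * (\<eta> - \<xi>) * (norm z)\<^sup>2 \<le> Re (herm_form (M \<eta>) z)"
proof -
  define g where "g t = Re (herm_form (M t) z) - \<beta> * (norm z)\<^sup>2 * t" for t
  define g' where "g' t = Re (herm_form (vector_derivative M (at t)) z) - \<beta> * (norm z)\<^sup>2" for t
  have "(g has_real_derivative g' t) (at t)" for t
  proof -
    have "((\<lambda>t. Re (herm_form (M t) z)) has_real_derivative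
        Re (herm_form (vector_derivative M (at t)) z)) (at t)"
      unfolding has_real_derivative_iff_has_vector_derivative
      by (rule bounded_linear.has_vector_derivative[OF bounded_linear_Re_herm_form
            vector_derivative_works[THEN iffD1, OF M]])
    from DERIV_diff[OF this DERIV_cmult_Id] show ?thesis
      by (simp add: g_def[abs_def] g'_def)
  qed
  moreover have "0 \<le> g' t" for t
    using loewner_le_scalar_matrix_left[OF M'] by (simp add: g'_def)
  ultimately have "g \<xi> \<le> g \<eta>"
    using \<open>\<xi> \<le> \<eta>\<close> by (intro DERIV_nonneg_imp_increasing_open[of _ _ g])
      (auto intro: DERIV_continuous_on has_field_derivative_at_within)
  then show ?thesis
    by (simp add: g_def algebra_simps)
qed

text \<open>For \<open>x < y\<close> in the chain, \<open>M y \<ge> M x + \<beta>(y - x) > M x + 2c\<close>, so a subspace on which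
  \<open>M y \<le> c\<close> is one on which \<open>M x < -c\<close>; the near-kernel vector at \<open>x\<close> then makes the count at \<open>x\<close>
  strictly larger.\<close>

lemma separated_chain_count:
  fixes M :: "real \<Rightarrow> complex^'n^'n"
  assumes sa: "\<And>\<xi>. self_adjoint (M \<xi>)"
    and mono: "\<And>\<xi> \<eta> z. \<xi> \<le> \<eta> \<Longrightarrow>
      Re (herm_form (M \<xi>) z) + \<beta> * (\<eta> - \<xi>) * (norm z)\<^sup>2 \<le> Re (herm_form (M \<eta>) z)"
    and "0 < \<beta>" "0 \<le> c"
    and near: "\<And>\<xi>. \<xi> \<in> S \<Longrightarrow> \<exists>v. v \<noteq> 0 \<and> norm (M \<xi> *v v) \<le> c * norm v"
  shows "separated (2 * c / \<beta>) (x # xs) \<Longrightarrow> set (x # xs) \<subseteq> S \<Longrightarrow>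
    \<exists>L. herm_le_on (M x) c L \<and> length (x # xs) \<le> card L"
proof (induction xs arbitrary: x)
  case Nil
  have "herm_less_on (M x) (- c) {}"
    by (simp add: herm_less_on_def vec.independent_empty vec.span_empty)
  then show ?case
    using self_adjoint_near_kernel_gap[OF sa] near[of x] Nil.prems(2) by fastforce
next
  case (Cons y ys)
  then obtain Ly where Ly: "herm_le_on (M y) c Ly" "length (y # ys) \<le> card Ly"
    by auto
  obtain v where "v \<noteq> 0" "norm (M x *v v) \<le> c * norm v"
    using near Cons.prems(2) by auto
  then obtain L where L: "herm_le_on (M x) c L"
    and gap: "\<forall>L'. herm_less_on (M x) (- c) L' \<longrightarrow> card L' < card L"
    using self_adjoint_near_kernel_gap[OF sa] by blast
  have "2 * c < \<beta> * (y - x)"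
    using Cons.prems(1) \<open>0 < \<beta>\<close> by (simp add: field_simps)
  moreover have "x \<le> y"
    using calculation \<open>0 < \<beta>\<close> \<open>0 \<le> c\<close> by (smt (verit) zero_less_mult_iff)
  ultimately have "herm_less_on (M x) (- c) Ly"
    by (intro herm_le_on_imp_herm_less_on[OF Ly(1)]) (auto intro: mono)
  then show ?case
    using gap Ly(2) L by fastforce
qed

lemma emeasure_near_singular_le:
  fixes M :: "real \<Rightarrow> complex^'n^'n"
  assumes sa: "\<And>\<xi>. self_adjoint (M \<xi>)"
    and mono: "\<And>\<xi> \<eta> z. \<xi> \<le> \<eta> \<Longrightarrow>
      Re (herm_form (M \<xi>) z) + \<beta> * (\<eta> - \<xi>) * (norm z)\<^sup>2 \<le> Re (herm_form (M \<eta>) z)"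
    and "0 < \<beta>" "0 \<le> c" "S \<in> sets lebesgue"
    and near: "\<And>\<xi>. \<xi> \<in> S \<Longrightarrow> \<exists>v. v \<noteq> 0 \<and> norm (M \<xi> *v v) \<le> c * norm v"
  shows "emeasure lebesgue S \<le> ennreal (real CARD('n) * (2 * c / \<beta>))"
proof (rule emeasure_separated_bound)
  fix xs assume xs: "separated (2 * c / \<beta>) xs" "set xs \<subseteq> S"
  show "length xs \<le> CARD('n)"
  proof (cases xs)
    case (Cons x rest)
    then obtain L where "herm_le_on (M x) c L" "length xs \<le> card L"
      using separated_chain_count[OF sa mono assms(3,4) near] xs by blast
    then show ?thesis
      using vec_independent_card_le(2) by (fastforce simp: herm_le_on_def)
  qed simp
qed (use assms in auto)

section \<open>Measure of the set where the inverse is large\<close>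

lemma opnorm_matrix_inv_ge_iff:
  fixes M :: "complex^'n^'n"
  assumes M: "invertible M" and "0 < \<alpha>"
  shows "1 / \<alpha> \<le> opnorm (matrix_inv M) \<longleftrightarrow> (\<exists>x. norm x = 1 \<and> norm (M *v x) \<le> \<alpha>)"
proof -
  define N where "N = matrix_inv M"
  have MN: "M *v (N *v y) = y" "N *v (M *v y) = y" for y
    using invertible_matrix_inv[OF M] by (simp_all add: N_def matrix_vector_mul_assoc)
  have "1 / \<alpha> \<le> opnorm N \<longleftrightarrow> (\<exists>x. norm x = 1 \<and> norm (M *v x) \<le> \<alpha>)"
  proof
    assume "1 / \<alpha> \<le> opnorm N"
    obtain y where y: "norm y = 1" "opnorm N = norm (N *v y)"
      using opnorm_attained .
    with \<open>1 / \<alpha> \<le> opnorm N\<close> \<open>0 < \<alpha>\<close> have "0 < norm (N *v y)" "1 \<le> \<alpha> * norm (N *v y)"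
      by (auto simp: field_simps order_less_le_trans[of 0 "1 / \<alpha>"])
    then have "norm (sgn (N *v y)) = 1" "norm (M *v sgn (N *v y)) \<le> \<alpha>"
      using y by (simp_all add: norm_sgn norm_matrix_vector_mult_sgn MN divide_le_eq mult.commute)
    then show "\<exists>x. norm x = 1 \<and> norm (M *v x) \<le> \<alpha>"
      by blast
  next
    assume "\<exists>x. norm x = 1 \<and> norm (M *v x) \<le> \<alpha>"
    then obtain x where x: "norm x = 1" "norm (M *v x) \<le> \<alpha>"
      by blast
    have "1 = norm (N *v (M *v x))"
      using x by (simp add: MN)
    also have "\<dots> \<le> opnorm N * norm (M *v x)"
      using onorm[OF matrix_vector_mul_bounded_linear] by (simp add: opnorm_def)
    also have "\<dots> \<le> opnorm N * \<alpha>"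
      by (rule mult_left_mono[OF x(2)])
        (simp add: opnorm_def onorm_pos_le[OF matrix_vector_mul_bounded_linear])
    finally show "1 / \<alpha> \<le> opnorm N"
      using \<open>0 < \<alpha>\<close> by (simp add: field_simps)
  qed
  then show ?thesis
    by (simp add: N_def)
qed

lemma inv_opnorm_ge_iff:
  fixes M :: "complex^'n^'n"
  assumes "0 < \<alpha>"
  shows "ereal (1 / \<alpha>) \<le> inv_opnorm M \<longleftrightarrow> (\<exists>x. norm x = 1 \<and> norm (M *v x) \<le> \<alpha>)"
proof (cases "invertible M")
  case True
  then show ?thesis
    using opnorm_matrix_inv_ge_iff[OF True assms] by (simp add: inv_opnorm_def)
next
  case False
  then obtain x where "x \<noteq> 0" "M *v x = 0"
    using invertible_left_inverse[of M] matrix_left_invertible_ker[of M] by blast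
  then have "norm (sgn x) = 1" "norm (M *v sgn x) \<le> \<alpha>"
    using \<open>0 < \<alpha>\<close> by (simp_all add: norm_sgn norm_matrix_vector_mult_sgn)
  then show ?thesis
    using False by (auto simp: inv_opnorm_def)
qed

lemma closed_near_singular:
  fixes A :: "real \<Rightarrow> complex^'n^'n"
  assumes "continuous_on UNIV A"
  shows "closed {\<xi>. \<exists>x. norm x = 1 \<and> norm (A \<xi> *v x) \<le> \<alpha>}"
proof -
  have "continuous_on UNIV (\<lambda>p. A (snd p))"
    by (rule continuous_on_compose2[OF assms continuous_on_snd]) auto
  then have "continuous_on UNIV (\<lambda>p. norm (A (snd p) *v fst p))"
    unfolding matrix_vector_mult_def
    by (intro continuous_on_vec_lambda continuous_intros continuous_on_component)
  then have "closed {p. norm (A (snd p) *v fst p) \<le> \<alpha>}"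
    by (intro closed_Collect_le continuous_on_const)
  then have "closed {\<xi>. \<exists>x. x \<in> sphere 0 1 \<and> (x, \<xi>) \<in> {p. norm (A (snd p) *v fst p) \<le> \<alpha>}}"
    by (intro closed_compact_projection compact_sphere)
  then show ?thesis
    by simp
qed

lemma small_value_mult_invertible:
  fixes A U :: "complex^'n^'n"
  assumes U: "invertible U" and x: "norm x = 1" "norm (A *v x) \<le> \<alpha>"
  shows "\<exists>y. y \<noteq> 0 \<and> norm ((A ** U) *v y) \<le> \<alpha> * opnorm U * norm y"
proof -
  define y where "y = matrix_inv U *v x"
  have Uy: "U *v y = x"
    using invertible_matrix_inv(1)[OF U] by (simp add: y_def matrix_vector_mul_assoc)
  have "0 \<le> \<alpha>"
    using x(2) norm_ge_zero order_trans by blast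
  have "norm ((A ** U) *v y) \<le> \<alpha> * norm (U *v y)"
    using x by (simp add: Uy flip: matrix_vector_mul_assoc)
  also have "\<dots> \<le> \<alpha> * (opnorm U * norm y)"
    using onorm[OF matrix_vector_mul_bounded_linear] \<open>0 \<le> \<alpha>\<close>
    by (intro mult_left_mono) (simp_all add: opnorm_def)
  finally show ?thesis
    using Uy x by (intro exI[of _ y]) (auto simp: mult.assoc)
qed

lemma emeasure_inv_opnorm_ge_le:
  fixes A :: "real \<Rightarrow> complex^'n^'n" and U :: "complex^'n^'n"
  assumes A: "A C1_differentiable_on UNIV" and U: "invertible U"
    and sa: "\<forall>\<xi>. self_adjoint (A \<xi> ** U)" and "0 < \<beta>"
    and AU': "\<forall>\<xi>. loewner_le (of_real \<beta> *s mat 1) (vector_derivative (\<lambda>t. A t ** U) (at \<xi>))"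
    and "0 < \<alpha>"
  shows "{\<xi>. ereal (1 / \<alpha>) \<le> inv_opnorm (A \<xi>)} \<in> sets lebesgue \<and>
    emeasure lebesgue {\<xi>. ereal (1 / \<alpha>) \<le> inv_opnorm (A \<xi>)}
      \<le> ennreal (2 * real CARD('n) * \<alpha> / \<beta> * opnorm U)"
proof -
  have dA: "A differentiable at t" for t
    using A by (simp add: C1_differentiable_on_eq)
  then have "continuous_on UNIV A"
    by (simp add: differentiable_imp_continuous_on differentiable_at_imp_differentiable_on)
  define S where "S = {\<xi>. \<exists>x. norm x = 1 \<and> norm (A \<xi> *v x) \<le> \<alpha>}"
  have S_eq: "{\<xi>. ereal (1 / \<alpha>) \<le> inv_opnorm (A \<xi>)} = S"
    by (simp add: S_def inv_opnorm_ge_iff[OF \<open>0 < \<alpha>\<close>])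
  have "closed S"
    unfolding S_def by (rule closed_near_singular[OF \<open>continuous_on UNIV A\<close>])
  then have S: "S \<in> sets lebesgue"
    by (intro sets_completionI_sets) (simp add: borel_closed)
  have "(\<lambda>t. A t ** U) differentiable at t" for t
    using differentiable_chain_at[OF dA bounded_linear_imp_differentiable[OF
          bounded_linear_matrix_mult_right]] by (simp add: o_def)
  then have mono: "\<xi> \<le> \<eta> \<Longrightarrow>
      Re (herm_form (A \<xi> ** U) z) + \<beta> * (\<eta> - \<xi>) * (norm z)\<^sup>2 \<le> Re (herm_form (A \<eta> ** U) z)"
    for \<xi> \<eta> z
    using herm_form_increase_of_derivative[where M = "\<lambda>t. A t ** U"] AU' by blast
  have near: "\<exists>y. y \<noteq> 0 \<and> norm ((A \<xi> ** U) *v y) \<le> \<alpha> * opnorm U * norm y"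
    if "\<xi> \<in> S" for \<xi>
  proof -
    obtain x where "norm x = 1" "norm (A \<xi> *v x) \<le> \<alpha>"
      using \<open>\<xi> \<in> S\<close> by (auto simp: S_def)
    then show ?thesis
      by (rule small_value_mult_invertible[OF U])
  qed
  have "emeasure lebesgue S \<le> ennreal (real CARD('n) * (2 * (\<alpha> * opnorm U) / \<beta>))"
    using sa \<open>0 < \<beta>\<close> \<open>0 < \<alpha>\<close>
    by (intro emeasure_near_singular_le[OF _ mono _ _ S near]) (simp_all add: opnorm_def onorm_pos_le)
  then show ?thesis
    using S by (simp add: S_eq mult.commute mult.left_commute)
qed

text \<open>With \<open>U = W\<inverse> Z\<close> the family \<open>(Z + \<xi> W) U = Z W\<inverse> Z + \<xi> Z\<close> is self-adjoint with derivative
  \<open>Z \<ge> \<beta>\<^sub>1\<close>, which reduces part (ii) to part (i).\<close>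

lemma normalized_affine_family:
  fixes Z W :: "complex^'n^'n"
  assumes "invertible W"
  shows "(Z + of_real t *s W) ** (matrix_inv W ** Z) = Z ** (matrix_inv W ** Z) + t *\<^sub>R Z"
  using invertible_matrix_inv(1)[OF assms]
  by (simp add: of_real_smult_matrix matrix_add_rdistrib matrix_scaleR_mult matrix_mul_assoc)

lemma emeasure_inv_opnorm_ge_affine_le:
  fixes Z W :: "complex^'n^'n"
  assumes saZ: "self_adjoint Z" and saW: "self_adjoint W" and W: "invertible W"
    and "0 < \<beta>\<^sub>1" and lower: "loewner_le (of_real \<beta>\<^sub>1 *s mat 1) Z"
    and upper: "loewner_le Z (of_real \<beta>\<^sub>2 *s mat 1)" and "0 < \<alpha>"
  shows "{\<xi>::real. ereal (1 / \<alpha>) \<le> inv_opnorm (Z + of_real \<xi> *s W)} \<in> sets lebesgue \<and>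
    emeasure lebesgue {\<xi>::real. ereal (1 / \<alpha>) \<le> inv_opnorm (Z + of_real \<xi> *s W)}
      \<le> ennreal (2 * real CARD('n) * \<alpha> * \<beta>\<^sub>2 / \<beta>\<^sub>1 * opnorm (matrix_inv W))"
proof -
  define U where "U = matrix_inv W ** Z"
  note AU = normalized_affine_family[OF W, of Z, folded U_def]
  have A': "((\<lambda>t. Z + of_real t *s W) has_vector_derivative W) (at t)" for t
    by (auto simp: of_real_smult_matrix intro!: derivative_eq_intros)
  then have "(\<lambda>t. Z + of_real t *s W) C1_differentiable_on UNIV"
    by (auto simp: C1_differentiable_on_eq vector_derivative_at[OF A'] intro: differentiableI_vector)
  moreover have "invertible (matrix_inv W)"
    using invertible_matrix_inv[OF W] unfolding invertible_def by blast
  then have "invertible U"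
    unfolding U_def by (rule invertible_mult[OF _ invertible_if_loewner_ge_pos[OF \<open>0 < \<beta>\<^sub>1\<close> lower]])
  moreover have "\<forall>\<xi>. self_adjoint ((Z + of_real \<xi> *s W) ** U)"
    using saZ self_adjoint_matrix_inv[OF saW W] unfolding AU
    by (simp add: self_adjoint_def cadj_add cadj_scaleR cadj_mult U_def matrix_mul_assoc)
  moreover have AU': "((\<lambda>t. (Z + of_real t *s W) ** U) has_vector_derivative Z) (at \<xi>)" for \<xi>
    unfolding AU by (auto intro!: derivative_eq_intros)
  then have "\<forall>\<xi>. loewner_le (of_real \<beta>\<^sub>1 *s mat 1)
      (vector_derivative (\<lambda>t. (Z + of_real t *s W) ** U) (at \<xi>))"
    by (simp add: vector_derivative_at[OF AU'] lower)
  ultimately have "{\<xi>. ereal (1 / \<alpha>) \<le> inv_opnorm (Z + of_real \<xi> *s W)} \<in> sets lebesgue \<and>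
      emeasure lebesgue {\<xi>. ereal (1 / \<alpha>) \<le> inv_opnorm (Z + of_real \<xi> *s W)}
        \<le> ennreal (2 * real CARD('n) * \<alpha> / \<beta>\<^sub>1 * opnorm U)"
    using emeasure_inv_opnorm_ge_le[where A = "\<lambda>t. Z + of_real t *s W"] \<open>0 < \<beta>\<^sub>1\<close> \<open>0 < \<alpha>\<close>
    by blast
  moreover have "opnorm U \<le> opnorm (matrix_inv W) * \<beta>\<^sub>2"
    unfolding U_def using opnorm_le_if_loewner_between[OF saZ _ lower upper] \<open>0 < \<beta>\<^sub>1\<close>
    by (intro order_trans[OF opnorm_matrix_mult_le] mult_left_mono)
      (simp_all add: opnorm_def onorm_pos_le)
  then have "2 * real CARD('n) * \<alpha> / \<beta>\<^sub>1 * opnorm U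
      \<le> 2 * real CARD('n) * \<alpha> / \<beta>\<^sub>1 * (opnorm (matrix_inv W) * \<beta>\<^sub>2)"
    using \<open>0 < \<alpha>\<close> \<open>0 < \<beta>\<^sub>1\<close> by (intro mult_left_mono) simp_all
  ultimately show ?thesis
    by (auto simp: ac_simps intro: order_trans ennreal_leI)
qed

theorem lemma6p2:
  shows
  "(\<forall>(A :: real \<Rightarrow> complex^'n::finite^'n) (U :: complex^'n^'n) (\<beta>::real) (\<alpha>::real).
      A C1_differentiable_on UNIV \<longrightarrow> invertible U \<longrightarrow>
      (\<forall>\<xi>. self_adjoint (A \<xi> ** U)) \<longrightarrow> 0 < \<beta> \<longrightarrow>
      (\<forall>\<xi>. loewner_le (of_real \<beta> *s mat 1) (vector_derivative (\<lambda>t. A t ** U) (at \<xi>))) \<longrightarrow>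
      0 < \<alpha> \<longrightarrow>
      {\<xi>. ereal (1 / \<alpha>) \<le> inv_opnorm (A \<xi>)} \<in> sets lebesgue \<and>
      emeasure lebesgue {\<xi>. ereal (1 / \<alpha>) \<le> inv_opnorm (A \<xi>)}
        \<le> ennreal (2 * real CARD('n) * \<alpha> / \<beta> * opnorm U))
   \<and>
   (\<forall>(Z :: complex^'n^'n) (W :: complex^'n^'n) (\<beta>\<^sub>1::real) (\<beta>\<^sub>2::real) (\<alpha>::real).
      self_adjoint Z \<longrightarrow> self_adjoint W \<longrightarrow> invertible W \<longrightarrow> 0 < \<beta>\<^sub>1 \<longrightarrow>
      loewner_le (of_real \<beta>\<^sub>1 *s mat 1) Z \<longrightarrow> loewner_le Z (of_real \<beta>\<^sub>2 *s mat 1) \<longrightarrow>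
      0 < \<alpha> \<longrightarrow>
      {\<xi>::real. ereal (1 / \<alpha>) \<le> inv_opnorm (Z + of_real \<xi> *s W)} \<in> sets lebesgue \<and>
      emeasure lebesgue {\<xi>::real. ereal (1 / \<alpha>) \<le> inv_opnorm (Z + of_real \<xi> *s W)}
        \<le> ennreal (2 * real CARD('n) * \<alpha> * \<beta>\<^sub>2 / \<beta>\<^sub>1 * opnorm (matrix_inv W)))"
  using emeasure_inv_opnorm_ge_le emeasure_inv_opnorm_ge_affine_le by blast

end
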